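(* Let $k>l\ge 0$ be integers. For an integer $n\ge 1$ let $C_n:\{0,\dots,2^{2n}-1\}\to\{0,\dots,2^n-1\}^2$ denote the Z curve (Z-order) of order $n$, and for a sequence $t=(t_0,\dots,t_{2^{2n}-1})$ let $I_n(t)$ be the $2^n\times 2^n$ image $I_n(t)(i,j)=t_{C_n^{-1}(i,j)}$; $I_n^{-1}$ denotes the inverse map sending a $2^n\times 2^n$ image back to a sequence of length $2^{2n}$. Let $W_l$ be a $2^l\times 2^l$ array of real numbers (a convolution kernel), and for a $2^k\times 2^k$ image $I$ define the stride-$2^l$ convolution output, a $2^{k-l}\times 2^{k-l}$ image, $$O_l(I)(i,j)=\sum_{m,n\in\{0,\dots,2^l-1\}} I(i2^l+m,\,j2^l+n)\,W_l(m,n),\qquad i,j\in\{0,\dots,2^{k-l}-1\}.$$ Let $s=(s_0,\dots,s_{2^{2k}-1})$ be a sequence of real numbers, let $d\in\mathbb{N}$, $r=d\,2^{2l}$, and let $s^r$ be the circular shift $s^r(i)=s\big((i+r)\bmod 2^{2k}\big)$. Then $I_{k-l}^{-1}\circ O_l\circ I_k(s^r)$ is equal to $I_{k-l}^{-1}\circ O_l\circ I_k(s)$ up to a (circular) shift of $d$ units, i.e. for every $u\in\{0,\dots,2^{2(k-l)}-1\}$, $$\big(I_{k-l}^{-1}\circ O_l\circ I_k(s^r)\big)(u)=\big(I_{k-l}^{-1}\circ O_l\circ I_k(s)\big)\big((u+d)\bmod 2^{2(k-l)}\big).$$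
   Context: Z curve of order $n$: write an index $z\in\{0,\dots,2^{2n}-1\}$ in binary as $z=z_{2n-1}z_{2n-2}\dots z_1z_0$ ($z_i\in\{0,1\}$). Then $C_n(z)=(x,y)$ where $x$ has binary expansion $z_{2n-1}z_{2n-3}\dots z_1$ and $y$ has binary expansion $z_{2n-2}z_{2n-4}\dots z_0$ (bit interleaving). $C_n$ is a bijection from $\{0,\dots,2^{2n}-1\}$ onto $\{0,\dots,2^n-1\}^2$, so $I_n$ is a bijection between sequences of length $2^{2n}$ and $2^n\times 2^n$ images. *)

theory Defs
  imports Complex_Main
begin

text \<open>Z curve of order n: bit de-interleaving. x collects the odd-position bits
 z_1, z_3, ..., y collects the even-position bits z_0, z_2, ...\<close>
definition zcurve :: "nat \<Rightarrow> nat \<Rightarrow> nat \<times> nat" where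
  "zcurve n z = ((\<Sum>i<n. ((z div 2 ^ (2 * i + 1)) mod 2) * 2 ^ i),
                 (\<Sum>i<n. ((z div 2 ^ (2 * i)) mod 2) * 2 ^ i))"

text \<open>Sequences are functions nat \<Rightarrow> real (only indices < 2^(2n) matter);
 images are functions nat \<Rightarrow> nat \<Rightarrow> real (only indices < 2^n matter).\<close>

definition img :: "nat \<Rightarrow> (nat \<Rightarrow> real) \<Rightarrow> nat \<Rightarrow> nat \<Rightarrow> real" where
  "img n t i j = t (the_inv_into {..<2 ^ (2 * n)} (zcurve n) (i, j))"

definition img_inv :: "nat \<Rightarrow> (nat \<Rightarrow> nat \<Rightarrow> real) \<Rightarrow> nat \<Rightarrow> real" where
  "img_inv n I u = I (fst (zcurve n u)) (snd (zcurve n u))"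

definition conv_out :: "nat \<Rightarrow> (nat \<Rightarrow> nat \<Rightarrow> real) \<Rightarrow> (nat \<Rightarrow> nat \<Rightarrow> real) \<Rightarrow> nat \<Rightarrow> nat \<Rightarrow> real" where
  "conv_out l W I i j = (\<Sum>m<2 ^ l. \<Sum>n<2 ^ l. I (i * 2 ^ l + m) (j * 2 ^ l + n) * W m n)"

end

theory Submission
  imports Defs
begin

text \<open>In Z-order the indices \<open>u * 4^l + c\<close>, \<open>c < 4^l\<close>, are exactly the pixels of the
  aligned \<open>2^l \<times> 2^l\<close> block at position \<open>zcurve (k - l) u\<close> of the coarse grid, with \<open>c\<close>
  addressing the pixel \<open>zcurve l c\<close> inside the block. Hence the stride-\<open>2^l\<close> convolution, read
  back in Z-order, is a block-local operation on the sequence: its \<open>u\<close>-th output is the dot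
  product of the \<open>u\<close>-th block of length \<open>4^l\<close> with the kernel read in Z-order. A circular
  shift by \<open>d * 4^l\<close> moves whole blocks, so it shifts the output by \<open>d\<close>.\<close>

lemma mult_add_less_mult:
  fixes u c :: nat
  assumes "u < A" "c < B"
  shows "u * B + c < A * B"
proof -
  have "u * B + c < Suc u * B" using assms(2) by simp
  also have "\<dots> \<le> A * B" using assms(1) by (intro mult_right_mono) auto
  finally show ?thesis .
qed

lemma mult_add_mod_mult:
  fixes q c :: nat
  assumes "c < B"
  shows "(q * B + c) mod (A * B) = q mod A * B + c"
  using assms mod_mult2_eq[of "q * B + c" B A] by (simp add: mult.commute)

lemma zcurve_0 [simp]: "zcurve 0 z = (0, 0)"
  by (simp add: zcurve_def)

lemma zcurve_Suc:
  "zcurve (Suc n) z = (z div 2 mod 2 + 2 * fst (zcurve n (z div 4)),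
                       z mod 2 + 2 * snd (zcurve n (z div 4)))"
proof -
  have shift: "z div 2 ^ (2 * Suc i + j) = z div 4 div 2 ^ (2 * i + j)" for i j
    by (simp add: div_mult2_eq power_add mult.commute)
  have "z div 2 ^ (2 * Suc i + 1) mod 2 * 2 ^ Suc i = 2 * (z div 4 div 2 ^ (2 * i + 1) mod 2 * 2 ^ i)"
   and "z div 2 ^ (2 * Suc i) mod 2 * 2 ^ Suc i = 2 * (z div 4 div 2 ^ (2 * i) mod 2 * 2 ^ i)" for i
    using shift[of i 1] shift[of i 0] by simp_all
  then show ?thesis
    unfolding zcurve_def prod.sel sum.lessThan_Suc_shift
    by (simp add: sum_distrib_left mult_ac)
qed

lemma zcurve_less: "fst (zcurve n z) < 2 ^ n" "snd (zcurve n z) < 2 ^ n"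
proof (induction n arbitrary: z)
  case (Suc n)
  { case 1 show ?case using Suc(1)[of "z div 4"] by (simp add: zcurve_Suc) }
  { case 2 show ?case using Suc(2)[of "z div 4"] by (simp add: zcurve_Suc) }
qed simp_all

lemma zcurve_surj:
  assumes "x < 2 ^ n" "y < 2 ^ n"
  shows "\<exists>z < 2 ^ (2 * n). zcurve n z = (x, y)"
  using assms
proof (induction n arbitrary: x y)
  case (Suc n)
  then obtain z' where z': "z' < 2 ^ (2 * n)" "zcurve n z' = (x div 2, y div 2)"
    by (metis less_mult_imp_div_less mult.commute power_Suc)
  define z where "z = y mod 2 + 2 * (x mod 2 + 2 * z')"
  have "z div 4 = z'" "z div 2 mod 2 = x mod 2" "z mod 2 = y mod 2"
    unfolding z_def by (simp, simp, simp add: mod2_eq_if)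
  then have "zcurve (Suc n) z = (x, y)"
    using z'(2) by (simp add: zcurve_Suc)
  moreover have "z < 2 ^ (2 * Suc n)"
    using z'(1) unfolding z_def by simp
  ultimately show ?case by blast
qed simp

lemma bij_betw_zcurve: "bij_betw (zcurve n) {..<2 ^ (2 * n)} ({..<2 ^ n} \<times> {..<2 ^ n})"
proof -
  have image: "zcurve n ` {..<2 ^ (2 * n)} = {..<2 ^ n} \<times> {..<2 ^ n}"
  proof (intro equalityI subsetI)
    fix p assume "p \<in> zcurve n ` {..<2 ^ (2 * n)}"
    then show "p \<in> {..<2 ^ n} \<times> {..<2 ^ n}"
      using zcurve_less by (auto simp: mem_Times_iff)
  next
    fix p :: "nat \<times> nat" assume "p \<in> {..<2 ^ n} \<times> {..<2 ^ n}"
    then obtain z where "z < 2 ^ (2 * n)" "zcurve n z = p"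
      using zcurve_surj[of "fst p" n "snd p"] by auto
    then show "p \<in> zcurve n ` {..<2 ^ (2 * n)}" by force
  qed
  have "card ({..<(2::nat) ^ n} \<times> {..<(2::nat) ^ n}) = card {..<(2::nat) ^ (2 * n)}"
    by (simp add: card_cartesian_product power_mult_distrib mult_2 power_add)
  then have "inj_on (zcurve n) {..<2 ^ (2 * n)}"
    by (intro eq_card_imp_inj_on) (simp_all add: image)
  with image show ?thesis
    by (simp add: bij_betw_def)
qed

lemma zcurve_block:
  assumes "c < 2 ^ (2 * b)"
  shows "zcurve (a + b) (x * 2 ^ (2 * b) + c) =
    (fst (zcurve a x) * 2 ^ b + fst (zcurve b c), snd (zcurve a x) * 2 ^ b + snd (zcurve b c))"
  using assms
proof (induction b arbitrary: c)
  case (Suc b)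
  have z: "x * 2 ^ (2 * Suc b) + c = c + 4 * (x * 2 ^ (2 * b))"
    by simp
  have "c div 4 < 2 ^ (2 * b)"
    using Suc.prems by (simp add: less_mult_imp_div_less)
  moreover have "(x * 2 ^ (2 * Suc b) + c) div 4 = x * 2 ^ (2 * b) + c div 4"
    unfolding z by simp
  moreover have "(x * 2 ^ (2 * Suc b) + c) div 2 mod 2 = c div 2 mod 2"
    unfolding z by (simp add: div_add1_eq)
  moreover have "(x * 2 ^ (2 * Suc b) + c) mod 2 = c mod 2"
    unfolding z by (simp add: mod2_eq_if)
  ultimately show ?case
    by (simp only: add_Suc_right zcurve_Suc Suc.IH) (simp add: algebra_simps)
qed simp

lemma img_zcurve: "z < 2 ^ (2 * n) \<Longrightarrow> img n t (fst (zcurve n z)) (snd (zcurve n z)) = t z"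
  using bij_betw_zcurve by (simp add: img_def bij_betw_def the_inv_into_f_f)

lemma img_inv_conv_out_img:
  assumes "u < 2 ^ (2 * N)"
  shows "img_inv N (conv_out l W (img (N + l) t)) u =
    (\<Sum>c<2 ^ (2 * l). t (u * 2 ^ (2 * l) + c) * W (fst (zcurve l c)) (snd (zcurve l c)))"
proof -
  let ?x = "fst (zcurve N u)" and ?y = "snd (zcurve N u)"
  have "img_inv N (conv_out l W (img (N + l) t)) u =
      (\<Sum>(m, n) \<in> {..<2 ^ l} \<times> {..<2 ^ l}. img (N + l) t (?x * 2 ^ l + m) (?y * 2 ^ l + n) * W m n)"
    by (simp add: img_inv_def conv_out_def sum.cartesian_product)
  also have "\<dots> = (\<Sum>c<2 ^ (2 * l). img (N + l) t (?x * 2 ^ l + fst (zcurve l c)) (?y * 2 ^ l + snd (zcurve l c))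
                       * W (fst (zcurve l c)) (snd (zcurve l c)))"
    using sum.reindex_bij_betw[OF bij_betw_zcurve,
        of "\<lambda>(m, n). img (N + l) t (?x * 2 ^ l + m) (?y * 2 ^ l + n) * W m n" l]
    by (simp add: case_prod_beta)
  also have "\<dots> = (\<Sum>c<2 ^ (2 * l). t (u * 2 ^ (2 * l) + c) * W (fst (zcurve l c)) (snd (zcurve l c)))"
  proof (rule sum.cong)
    fix c :: nat assume "c \<in> {..<2 ^ (2 * l)}"
    then have "c < 2 ^ (2 * l)" by simp
    moreover have "u * 2 ^ (2 * l) + c < 2 ^ (2 * (N + l))"
      using mult_add_less_mult[OF assms \<open>c < 2 ^ (2 * l)\<close>] by (simp add: power_add)
    ultimately show "img (N + l) t (?x * 2 ^ l + fst (zcurve l c)) (?y * 2 ^ l + snd (zcurve l c))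
                       * W (fst (zcurve l c)) (snd (zcurve l c)) =
                     t (u * 2 ^ (2 * l) + c) * W (fst (zcurve l c)) (snd (zcurve l c))"
      using img_zcurve[of "u * 2 ^ (2 * l) + c" "N + l" t] by (simp add: zcurve_block)
  qed simp
  finally show ?thesis .
qed

theorem lemma1:
  fixes k l d u :: nat and s :: "nat \<Rightarrow> real" and W :: "nat \<Rightarrow> nat \<Rightarrow> real"
  assumes "l < k" and "u < 2 ^ (2 * (k - l))"
  shows "img_inv (k - l) (conv_out l W (img k (\<lambda>i. s ((i + d * 2 ^ (2 * l)) mod 2 ^ (2 * k))))) u
       = img_inv (k - l) (conv_out l W (img k s)) ((u + d) mod 2 ^ (2 * (k - l)))"
proof -
  define N where "N = k - l"
  have k: "k = N + l"
    using assms(1) unfolding N_def by simp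
  have u: "u < 2 ^ (2 * N)"
    using assms(2) unfolding N_def .
  let ?B = "2 ^ (2 * l) :: nat" and ?u' = "(u + d) mod 2 ^ (2 * N)"
  let ?w = "\<lambda>c. W (fst (zcurve l c)) (snd (zcurve l c))"
  have shift: "(u * ?B + c + d * ?B) mod 2 ^ (2 * k) = ?u' * ?B + c" if "c < ?B" for c
    using mult_add_mod_mult[OF that, of "u + d" "2 ^ (2 * N)"]
    by (simp add: k power_add algebra_simps)
  have "img_inv N (conv_out l W (img k (\<lambda>i. s ((i + d * ?B) mod 2 ^ (2 * k))))) u
      = (\<Sum>c<?B. s ((u * ?B + c + d * ?B) mod 2 ^ (2 * k)) * ?w c)"
    using img_inv_conv_out_img[OF u] by (simp add: k)
  also have "\<dots> = (\<Sum>c<?B. s (?u' * ?B + c) * ?w c)"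
    by (intro sum.cong) (simp_all add: shift)
  also have "\<dots> = img_inv N (conv_out l W (img k s)) ?u'"
    using img_inv_conv_out_img[of ?u' N] by (simp add: k)
  finally show ?thesis
    unfolding N_def .
qed

end
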